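(* Let $m$ be a positive integer, $\tau=\sigma/m$, and consider the explicit Euler scheme $$S^{n+1} = S^n - \tau\, S^n\circ T^{n-m} - c\tau S^n,\qquad I^{n+1} = I^n + \tau\, S^n\circ T^{n-m} - b\tau I^n,\qquad R^{n+1} = R^n + b\tau I^n + c\tau S^n,$$ for $0\le n\le m\mathcal{T}/\sigma$, where for $-m\le n\le 0$ the matrices $S^n,I^n,R^n$ are the history functions evaluated on the grids $\mathcal{G}$ and $\mathcal{G}_t$. Suppose the discretized history values satisfy $D_1$–$D_4$. Then $D_2$ holds for the scheme without any restriction on $\tau$. Furthermore, if $$\tau=\frac{\sigma}{m}\le \min\left\{\frac{1}{\bar T + c},\ \frac{1}{b}\right\},\qquad \bar T=\max_{(x_k,y_l)\in\mathcal{G}} M\sum_{i=1}^p w_i\,W(x_k+\eta_i,y_l+\xi_i),$$ $$M=\max_{(x_k,y_l)\in\mathcal{G}}\{S(0,x_k,y_l)+I(0,x_k,y_l)+R(0,x_k,y_l)\},$$ then $D_1$, $D_3$ and $D_4$ also hold up to step $n\le m\mathcal{T}/\sigma$.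
   Context: $\Omega=(0,A)\times(0,B)$; spatial grid $\mathcal{G}=\{(x_k,y_l): x_k=(k-1)h_x,\ y_l=(l-1)h_y,\ 1\le k\le K,\ 1\le l\le L\}$ with $(K-1)h_x=A$, $(L-1)h_y=B$. Time grid $\mathcal{G}_t=\{t_n=n\sigma/m:\ -m\le n\le m\mathcal{T}/\sigma\}$. Constants $b,c,\sigma,\delta,\mathcal{T}>0$. $W\ge0$ is continuous and bounded. Cubature points $(x+\eta_i,y+\xi_i)$ in the open disc of radius $\delta$ around $(x,y)$, $i=1,\dots,p$, with weights $w_i>0$. For $X\in\{S,I,R\}$, $X^n$ is the $K\times L$ matrix whose $(k,l)$ entry approximates the value at $(x_k,y_l)$ and time $t_n$; $\circ$ is the entrywise (Hadamard) product. $T^{n-m}$ is the matrix with entries $T^{n-m}_{k,l}=\sum_{i=1}^p w_i W(x_k+\eta_i,y_l+\xi_i)\,\hat I^{n-m}(x_k+\eta_i,y_l+\xi_i)$, where $\hat I^{n-m}$ is obtained from the entries of $I^{n-m}$ (taken as zero outside $\Omega$) by a fixed interpolation which, for non-negative grid data, produces values between $0$ and the maximum of the grid data. Discrete properties: $D_1$: all entries of $S^n,I^n,R^n$ are non-negative; $D_2$: $S^n_{k,l}+I^n_{k,l}+R^n_{k,l}$ is independent of $n$ for every $(k,l)$; $D_3$: $S^{n+1}_{k,l}\le S^n_{k,l}$; $D_4$: $R^{n+1}_{k,l}\ge R^n_{k,l}$. *)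

theory Defs
  imports "HOL-Analysis.Analysis"
begin

text \<open>Spatial grid coordinates: x_k = (k-1) h_x, y_l = (l-1) h_y (indices start at 1).\<close>
definition gridc :: "real \<Rightarrow> nat \<Rightarrow> real" where
  "gridc h k = real (k - 1) * h"

definition Tcub ::
  "((nat \<Rightarrow> nat \<Rightarrow> real) \<Rightarrow> real \<Rightarrow> real \<Rightarrow> real) \<Rightarrow> (real \<Rightarrow> real \<Rightarrow> real) \<Rightarrow>
   nat \<Rightarrow> (nat \<Rightarrow> real) \<Rightarrow> (nat \<Rightarrow> real) \<Rightarrow> (nat \<Rightarrow> real) \<Rightarrow> real \<Rightarrow> real \<Rightarrow>
   (nat \<Rightarrow> nat \<Rightarrow> real) \<Rightarrow> nat \<Rightarrow> nat \<Rightarrow> real" where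
  "Tcub interp W p w \<eta> \<xi> hx hy Ij k l =
     (\<Sum>i\<in>{1..p}. w i * W (gridc hx k + \<eta> i) (gridc hy l + \<xi> i)
                 * interp Ij (gridc hx k + \<eta> i) (gridc hy l + \<xi> i))"

end

(* Each Euler step only moves mass between the compartments of a single grid cell, so
   S + I + R is conserved cell by cell for every step size.  Positivity propagates forward
   in time by strong induction: if all values up to step n are non-negative, conservation
   bounds the delayed infectives I^(n-m) by the initial total mass M, hence the cubature
   term T^(n-m) lies in [0, Tbar], and under the step-size restriction the update writes
   S^(n+1) and I^(n+1) as non-negative combinations of S^n, I^n, while R can only grow. *)

theory Submission
  imports Defs
begin

lemma int_delay_induct [consumes 2, case_names history step]:
  fixes P :: "int \<Rightarrow> bool" and m :: nat and n :: int and N :: real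
  assumes "- int m \<le> n" and "real_of_int n \<le> N + 1"
    and history: "\<And>n. - int m \<le> n \<Longrightarrow> n \<le> 0 \<Longrightarrow> P n"
    and advance: "\<And>n. 0 \<le> n \<Longrightarrow> real_of_int n \<le> N \<Longrightarrow> (\<And>j. - int m \<le> j \<Longrightarrow> j \<le> n \<Longrightarrow> P j) \<Longrightarrow> P (n + 1)"
  shows "P n"
proof -
  have "\<forall>j. - int m \<le> j \<longrightarrow> j \<le> i \<longrightarrow> real_of_int j \<le> N + 1 \<longrightarrow> P j" if "- int m \<le> i" for i
    using that
  proof (induction i rule: int_ge_induct)
    case base
    then show ?case using history by auto
  next
    case (step i)
    show ?case
    proof (intro allI impI)
      fix j assume j: "- int m \<le> j" "j \<le> i + 1" "real_of_int j \<le> N + 1"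
      show "P j"
      proof (cases "j \<le> i \<or> j \<le> 0")
        case True
        then show ?thesis using step.IH history j by auto
      next
        case False
        then have "j = i + 1" "0 \<le> i" "real_of_int i \<le> N" using j by auto
        moreover have "P j'" if "- int m \<le> j'" "j' \<le> i" for j'
          using step.IH that \<open>real_of_int i \<le> N\<close> by force
        ultimately show ?thesis using advance by blast
      qed
    qed
  qed
  then show ?thesis using assms(1,2) by blast
qed

lemma euler_sir_step_nonneg:
  fixes s i tau T Tbar b c :: real
  assumes "0 \<le> s" "0 \<le> i" "0 \<le> T" "T \<le> Tbar" "0 \<le> tau" "0 \<le> b" "0 \<le> c"
    and "tau * (Tbar + c) \<le> 1" and "tau * b \<le> 1"
  shows "0 \<le> s - tau * s * T - c * tau * s" and "s - tau * s * T - c * tau * s \<le> s"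
    and "0 \<le> i + tau * s * T - b * tau * i" and "0 \<le> b * tau * i + c * tau * s"
proof -
  have "tau * T + tau * c \<le> 1"
    using assms(4,5,8) mult_left_mono[of T Tbar tau] by (simp add: algebra_simps)
  then have "0 \<le> s * (1 - tau * T - tau * c)" using assms(1) by simp
  then show "0 \<le> s - tau * s * T - c * tau * s" by (simp add: algebra_simps)
  have "0 \<le> tau * s * T" "0 \<le> c * tau * s" using assms by simp_all
  then show "s - tau * s * T - c * tau * s \<le> s" by linarith
  have "0 \<le> i * (1 - tau * b)" "0 \<le> tau * s * T" using assms by simp_all
  then show "0 \<le> i + tau * s * T - b * tau * i" by (simp add: algebra_simps)
  show "0 \<le> b * tau * i + c * tau * s" using assms by simp
qed

lemma Tcub_bounds:
  assumes "\<And>x y. W x y \<ge> 0" and "\<And>i. i \<in> {1..p} \<Longrightarrow> w i \<ge> 0"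
    and "\<And>x y. 0 \<le> interp g x y \<and> interp g x y \<le> M"
  shows "0 \<le> Tcub interp W p w \<eta> \<xi> hx hy g k l"
    and "Tcub interp W p w \<eta> \<xi> hx hy g k l
           \<le> M * (\<Sum>i\<in>{1..p}. w i * W (gridc hx k + \<eta> i) (gridc hy l + \<xi> i))"
proof -
  have weight: "0 \<le> w i * W (gridc hx k + \<eta> i) (gridc hy l + \<xi> i)" if "i \<in> {1..p}" for i
    using assms(1,2) that by simp
  show "0 \<le> Tcub interp W p w \<eta> \<xi> hx hy g k l"
    unfolding Tcub_def using weight assms(3) by (intro sum_nonneg) simp
  have "Tcub interp W p w \<eta> \<xi> hx hy g k l
          \<le> (\<Sum>i\<in>{1..p}. w i * W (gridc hx k + \<eta> i) (gridc hy l + \<xi> i) * M)"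
    unfolding Tcub_def using weight assms(3) by (intro sum_mono mult_left_mono) auto
  then show "Tcub interp W p w \<eta> \<xi> hx hy g k l
               \<le> M * (\<Sum>i\<in>{1..p}. w i * W (gridc hx k + \<eta> i) (gridc hy l + \<xi> i))"
    by (simp add: sum_distrib_left mult.commute)
qed

lemma mult_le_one_if_le_inverse:
  fixes tau x :: real
  assumes "0 < tau" and "tau \<le> 1 / x"
  shows "tau * x \<le> 1"
proof -
  have "0 < x" using assms by (metis divide_le_0_1_iff not_le order_less_le_trans)
  then show ?thesis using assms(2) by (simp add: le_divide_eq mult.commute)
qed

(* T n k l stands for the delayed cubature term T^(n-m) at grid cell (k, l). *)
locale delayed_sir_euler =
  fixes S I R T :: "int \<Rightarrow> 'a \<Rightarrow> 'b \<Rightarrow> real" and X :: "'a set" and Y :: "'b set"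
    and m :: nat and N tau b c :: real
  assumes euler_step: "\<And>n k l. 0 \<le> n \<Longrightarrow> real_of_int n \<le> N \<Longrightarrow> k \<in> X \<Longrightarrow> l \<in> Y \<Longrightarrow>
      S (n + 1) k l = S n k l - tau * S n k l * T n k l - c * tau * S n k l \<and>
      I (n + 1) k l = I n k l + tau * S n k l * T n k l - b * tau * I n k l \<and>
      R (n + 1) k l = R n k l + b * tau * I n k l + c * tau * S n k l"
    and history_total: "\<And>n k l. - int m \<le> n \<Longrightarrow> n \<le> 0 \<Longrightarrow> k \<in> X \<Longrightarrow> l \<in> Y \<Longrightarrow>
      S n k l + I n k l + R n k l = S 0 k l + I 0 k l + R 0 k l"
begin

lemma total_const:
  assumes "- int m \<le> n" "real_of_int n \<le> N + 1" "k \<in> X" "l \<in> Y"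
  shows "S n k l + I n k l + R n k l = S 0 k l + I 0 k l + R 0 k l"
  using assms(1,2)
proof (induction n rule: int_delay_induct)
  case (history n)
  then show ?case using history_total assms(3,4) by blast
next
  case (step n)
  have "S (n + 1) k l + I (n + 1) k l + R (n + 1) k l = S n k l + I n k l + R n k l"
    using euler_step[OF step(1,2) assms(3,4)] by simp
  also have "\<dots> = S 0 k l + I 0 k l + R 0 k l" using step(3)[of n] step(1) by simp
  finally show ?case .
qed

end

locale delayed_sir_euler_cfl = delayed_sir_euler +
  fixes M Tbar :: real
  assumes tau_pos: "0 < tau" and b_nonneg: "0 \<le> b" and c_nonneg: "0 \<le> c"
    and cfl_T: "tau * (Tbar + c) \<le> 1" and cfl_b: "tau * b \<le> 1"
    and history_nonneg: "\<And>n k l. - int m \<le> n \<Longrightarrow> n \<le> 0 \<Longrightarrow> k \<in> X \<Longrightarrow> l \<in> Y \<Longrightarrow>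
      0 \<le> S n k l \<and> 0 \<le> I n k l \<and> 0 \<le> R n k l"
    and history_S_antimono: "\<And>n k l. - int m \<le> n \<Longrightarrow> n < 0 \<Longrightarrow> k \<in> X \<Longrightarrow> l \<in> Y \<Longrightarrow>
      S (n + 1) k l \<le> S n k l"
    and history_R_mono: "\<And>n k l. - int m \<le> n \<Longrightarrow> n < 0 \<Longrightarrow> k \<in> X \<Longrightarrow> l \<in> Y \<Longrightarrow>
      R n k l \<le> R (n + 1) k l"
    and initial_total_le: "\<And>k l. k \<in> X \<Longrightarrow> l \<in> Y \<Longrightarrow> S 0 k l + I 0 k l + R 0 k l \<le> M"
    and coupling_bounds: "\<And>n k l. \<forall>k\<in>X. \<forall>l\<in>Y. 0 \<le> I (n - int m) k l \<and> I (n - int m) k l \<le> M \<Longrightarrow>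
      k \<in> X \<Longrightarrow> l \<in> Y \<Longrightarrow> 0 \<le> T n k l \<and> T n k l \<le> Tbar"
begin

definition nonneg_at :: "int \<Rightarrow> bool" where
  "nonneg_at n \<longleftrightarrow> (\<forall>k\<in>X. \<forall>l\<in>Y. 0 \<le> S n k l \<and> 0 \<le> I n k l \<and> 0 \<le> R n k l)"

lemma step_nonneg_mono:
  assumes n: "0 \<le> n" "real_of_int n \<le> N" and past: "\<And>j. - int m \<le> j \<Longrightarrow> j \<le> n \<Longrightarrow> nonneg_at j"
    and kl: "k \<in> X" "l \<in> Y"
  shows "0 \<le> S (n + 1) k l \<and> 0 \<le> I (n + 1) k l \<and> 0 \<le> R (n + 1) k l \<and>
         S (n + 1) k l \<le> S n k l \<and> R n k l \<le> R (n + 1) k l"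
proof -
  have "\<forall>k\<in>X. \<forall>l\<in>Y. 0 \<le> I (n - int m) k l \<and> I (n - int m) k l \<le> M"
    using past[of "n - int m"] total_const[of "n - int m"] initial_total_le n
    by (fastforce simp: nonneg_at_def)
  then have T: "0 \<le> T n k l" "T n k l \<le> Tbar" using coupling_bounds kl by auto
  have SIR: "0 \<le> S n k l" "0 \<le> I n k l" "0 \<le> R n k l"
    using past[of n] n kl by (auto simp: nonneg_at_def)
  note bounds = euler_sir_step_nonneg[OF SIR(1,2) T less_imp_le[OF tau_pos] b_nonneg c_nonneg cfl_T cfl_b]
  show ?thesis using euler_step[OF n kl] bounds SIR(3) by (elim conjE) linarith
qed

lemma nonneg:
  assumes "- int m \<le> n" "real_of_int n \<le> N + 1" "k \<in> X" "l \<in> Y"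
  shows "0 \<le> S n k l \<and> 0 \<le> I n k l \<and> 0 \<le> R n k l"
proof -
  have "nonneg_at n" using assms(1,2)
  proof (induction n rule: int_delay_induct)
    case (history n)
    then show ?case using history_nonneg by (simp add: nonneg_at_def)
  next
    case (step n)
    then show ?case using step_nonneg_mono by (simp add: nonneg_at_def)
  qed
  then show ?thesis using assms(3,4) by (simp add: nonneg_at_def)
qed

lemma S_antimono_R_mono:
  assumes "- int m \<le> n" "real_of_int n \<le> N" "k \<in> X" "l \<in> Y"
  shows "S (n + 1) k l \<le> S n k l \<and> R n k l \<le> R (n + 1) k l"
proof (cases "n < 0")
  case True
  then show ?thesis using history_S_antimono history_R_mono assms by simp
next
  case False
  have "nonneg_at j" if "- int m \<le> j" "j \<le> n" for j
    using nonneg[of j] that assms(2) by (simp add: nonneg_at_def)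
  then show ?thesis using step_nonneg_mono[of n k l] False assms by simp
qed

end

theorem theorem5:
  fixes A B hx hy b c sigma delta Tend :: real
    and K L m p :: nat
    and W :: "real \<Rightarrow> real \<Rightarrow> real"
    and w \<eta> \<xi> :: "nat \<Rightarrow> real"
    and interp :: "(nat \<Rightarrow> nat \<Rightarrow> real) \<Rightarrow> real \<Rightarrow> real \<Rightarrow> real"
    and Sh Ih Rh :: "real \<Rightarrow> real \<Rightarrow> real \<Rightarrow> real"
    and S I R :: "int \<Rightarrow> nat \<Rightarrow> nat \<Rightarrow> real"
  assumes A_pos: "A > 0" and B_pos: "B > 0"
    and hx_pos: "hx > 0" and hy_pos: "hy > 0"
    and K_ge: "K \<ge> 1" and L_ge: "L \<ge> 1"
    and hxA: "real (K - 1) * hx = A" and hyB: "real (L - 1) * hy = B"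
    and b_pos: "b > 0" and c_pos: "c > 0" and sigma_pos: "sigma > 0"
    and delta_pos: "delta > 0" and Tend_pos: "Tend > 0"
    and m_pos: "m > 0"
    and W_nonneg: "\<And>x y. W x y \<ge> 0"
    and W_cont: "continuous_on UNIV (\<lambda>(x, y). W x y)"
    and W_bdd: "bounded (range (\<lambda>(x, y). W x y))"
    and cub_pts: "\<And>i. i \<in> {1..p} \<Longrightarrow> (\<eta> i)\<^sup>2 + (\<xi> i)\<^sup>2 < delta\<^sup>2"
    and cub_w: "\<And>i. i \<in> {1..p} \<Longrightarrow> w i > 0"
    and interp_local: "\<And>g g'. (\<forall>k\<in>{1..K}. \<forall>l\<in>{1..L}. g k l = g' k l) \<Longrightarrow> interp g = interp g'"
    and interp_bounds: "\<And>g x y. (\<forall>k\<in>{1..K}. \<forall>l\<in>{1..L}. g k l \<ge> 0) \<Longrightarrow>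
          0 \<le> interp g x y \<and> interp g x y \<le> Max {g k l | k l. k \<in> {1..K} \<and> l \<in> {1..L}}"
    and hist: "\<And>n k l. - int m \<le> n \<Longrightarrow> n \<le> 0 \<Longrightarrow> k \<in> {1..K} \<Longrightarrow> l \<in> {1..L} \<Longrightarrow>
          S n k l = Sh (real_of_int n * sigma / real m) (gridc hx k) (gridc hy l) \<and>
          I n k l = Ih (real_of_int n * sigma / real m) (gridc hx k) (gridc hy l) \<and>
          R n k l = Rh (real_of_int n * sigma / real m) (gridc hx k) (gridc hy l)"
    and hist_D1: "\<And>n k l. - int m \<le> n \<Longrightarrow> n \<le> 0 \<Longrightarrow> k \<in> {1..K} \<Longrightarrow> l \<in> {1..L} \<Longrightarrow>
          S n k l \<ge> 0 \<and> I n k l \<ge> 0 \<and> R n k l \<ge> 0"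
    and hist_D2: "\<And>n n' k l. - int m \<le> n \<Longrightarrow> n \<le> 0 \<Longrightarrow> - int m \<le> n' \<Longrightarrow> n' \<le> 0 \<Longrightarrow>
          k \<in> {1..K} \<Longrightarrow> l \<in> {1..L} \<Longrightarrow>
          S n k l + I n k l + R n k l = S n' k l + I n' k l + R n' k l"
    and hist_D3: "\<And>n k l. - int m \<le> n \<Longrightarrow> n < 0 \<Longrightarrow> k \<in> {1..K} \<Longrightarrow> l \<in> {1..L} \<Longrightarrow>
          S (n + 1) k l \<le> S n k l"
    and hist_D4: "\<And>n k l. - int m \<le> n \<Longrightarrow> n < 0 \<Longrightarrow> k \<in> {1..K} \<Longrightarrow> l \<in> {1..L} \<Longrightarrow>
          R (n + 1) k l \<ge> R n k l"
    and scheme: "\<And>n k l. 0 \<le> n \<Longrightarrow> real_of_int n \<le> real m * Tend / sigma \<Longrightarrow>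
          k \<in> {1..K} \<Longrightarrow> l \<in> {1..L} \<Longrightarrow>
          S (n + 1) k l = S n k l
             - (sigma / real m) * S n k l * Tcub interp W p w \<eta> \<xi> hx hy (I (n - int m)) k l
             - c * (sigma / real m) * S n k l \<and>
          I (n + 1) k l = I n k l
             + (sigma / real m) * S n k l * Tcub interp W p w \<eta> \<xi> hx hy (I (n - int m)) k l
             - b * (sigma / real m) * I n k l \<and>
          R (n + 1) k l = R n k l + b * (sigma / real m) * I n k l + c * (sigma / real m) * S n k l"
  shows
    "(\<forall>n k l. - int m \<le> n \<longrightarrow> real_of_int n \<le> real m * Tend / sigma + 1 \<longrightarrow>
        k \<in> {1..K} \<longrightarrow> l \<in> {1..L} \<longrightarrow>
        S n k l + I n k l + R n k l = S 0 k l + I 0 k l + R 0 k l)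
     \<and>
     (let M = Max {Sh 0 (gridc hx k) (gridc hy l) + Ih 0 (gridc hx k) (gridc hy l)
                    + Rh 0 (gridc hx k) (gridc hy l) | k l. k \<in> {1..K} \<and> l \<in> {1..L}};
          Tbar = Max {M * (\<Sum>i\<in>{1..p}. w i * W (gridc hx k + \<eta> i) (gridc hy l + \<xi> i))
                      | k l. k \<in> {1..K} \<and> l \<in> {1..L}}
      in sigma / real m \<le> min (1 / (Tbar + c)) (1 / b) \<longrightarrow>
        (\<forall>n k l. - int m \<le> n \<longrightarrow> real_of_int n \<le> real m * Tend / sigma + 1 \<longrightarrow>
            k \<in> {1..K} \<longrightarrow> l \<in> {1..L} \<longrightarrow>
            S n k l \<ge> 0 \<and> I n k l \<ge> 0 \<and> R n k l \<ge> 0) \<and>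
        (\<forall>n k l. - int m \<le> n \<longrightarrow> real_of_int n \<le> real m * Tend / sigma \<longrightarrow>
            k \<in> {1..K} \<longrightarrow> l \<in> {1..L} \<longrightarrow>
            S (n + 1) k l \<le> S n k l \<and> R (n + 1) k l \<ge> R n k l))"
proof -
  define tau where "tau = sigma / real m"
  define N where "N = real m * Tend / sigma"
  define M where "M = Max {Sh 0 (gridc hx k) (gridc hy l) + Ih 0 (gridc hx k) (gridc hy l)
                    + Rh 0 (gridc hx k) (gridc hy l) | k l. k \<in> {1..K} \<and> l \<in> {1..L}}"
  define Tbar where "Tbar = Max {M * (\<Sum>i\<in>{1..p}. w i * W (gridc hx k + \<eta> i) (gridc hy l + \<xi> i))
                      | k l. k \<in> {1..K} \<and> l \<in> {1..L}}"
  let ?T = "\<lambda>n. Tcub interp W p w \<eta> \<xi> hx hy (I (n - int m))"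
  interpret delayed_sir_euler S I R ?T "{1..K}" "{1..L}" m N tau b c
  proof
    show "S (n + 1) k l = S n k l - tau * S n k l * ?T n k l - c * tau * S n k l \<and>
        I (n + 1) k l = I n k l + tau * S n k l * ?T n k l - b * tau * I n k l \<and>
        R (n + 1) k l = R n k l + b * tau * I n k l + c * tau * S n k l"
      if "0 \<le> n" "real_of_int n \<le> N" "k \<in> {1..K}" "l \<in> {1..L}" for n k l
      using that unfolding tau_def N_def by (rule scheme)
  qed (rule hist_D2; simp)
  have cfl_consequences:
    "(\<forall>n k l. - int m \<le> n \<longrightarrow> real_of_int n \<le> N + 1 \<longrightarrow> k \<in> {1..K} \<longrightarrow> l \<in> {1..L} \<longrightarrow>
        S n k l \<ge> 0 \<and> I n k l \<ge> 0 \<and> R n k l \<ge> 0) \<and>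
     (\<forall>n k l. - int m \<le> n \<longrightarrow> real_of_int n \<le> N \<longrightarrow> k \<in> {1..K} \<longrightarrow> l \<in> {1..L} \<longrightarrow>
        S (n + 1) k l \<le> S n k l \<and> R (n + 1) k l \<ge> R n k l)"
    if cfl: "tau \<le> min (1 / (Tbar + c)) (1 / b)"
  proof -
    have tau_pos: "0 < tau" using sigma_pos m_pos by (simp add: tau_def)
    have initial_total_le: "S 0 k l + I 0 k l + R 0 k l \<le> M" if "k \<in> {1..K}" "l \<in> {1..L}" for k l
      using hist[of 0 k l] that unfolding M_def by (intro Max_ge finite_image_set2) auto
    have coupling_bounds: "0 \<le> Tcub interp W p w \<eta> \<xi> hx hy g k l \<and> Tcub interp W p w \<eta> \<xi> hx hy g k l \<le> Tbar"
      if g: "\<forall>k\<in>{1..K}. \<forall>l\<in>{1..L}. 0 \<le> g k l \<and> g k l \<le> M" and "k \<in> {1..K}" "l \<in> {1..L}" for g k l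
    proof -
      have "Max {g k l | k l. k \<in> {1..K} \<and> l \<in> {1..L}} \<le> M"
        using g K_ge L_ge by (intro Max.boundedI finite_image_set2) auto
      then have "0 \<le> interp g x y \<and> interp g x y \<le> M" for x y
        using interp_bounds[of g x y] g by auto
      moreover have "M * (\<Sum>i\<in>{1..p}. w i * W (gridc hx k + \<eta> i) (gridc hy l + \<xi> i)) \<le> Tbar"
        using that(2,3) unfolding Tbar_def by (intro Max_ge finite_image_set2) auto
      ultimately show ?thesis
        using Tcub_bounds[of W p w interp g M \<eta> \<xi> hx hy k l] W_nonneg cub_w
        by (meson less_imp_le order_trans)
    qed
    have "tau * (Tbar + c) \<le> 1" "tau * b \<le> 1"
      using cfl by (simp_all add: mult_le_one_if_le_inverse[OF tau_pos])
    interpret delayed_sir_euler_cfl S I R ?T "{1..K}" "{1..L}" m N tau b c M Tbar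
      by unfold_locales
        (use tau_pos b_pos c_pos \<open>tau * (Tbar + c) \<le> 1\<close> \<open>tau * b \<le> 1\<close>
          hist_D1 hist_D3 hist_D4 initial_total_le coupling_bounds in auto)
    show ?thesis using nonneg S_antimono_R_mono by simp
  qed
  show ?thesis
    using total_const cfl_consequences unfolding Let_def M_def[symmetric] Tbar_def[symmetric] tau_def N_def
    by simp
qed

end
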